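(* Let $A$ be an integral quantum B-algebra, let $X,F\in U(A)$, let $F$ be a filter of $A$, and assume $1\in X\cap F$. Write $W=\mu_F(X)$. Then: (1) $W\cdot\mu_F(W\leadsto X)=W=\mu_F(W\to X)\cdot W$; (2) $\mu_F(W\to X)\to(W\to X)=W\to X$; (3) $\mu_F(W\leadsto X)\leadsto(W\leadsto X)=W\leadsto X$; (4) $(W\to X)\cdot\mu_F(W\to X)=W\to X$; (5) $\mu_F(W\leadsto X)\cdot(W\leadsto X)=W\leadsto X$; (6) $\mu_F(W\to X)=\mu_F(W\to X)\cdot\mu_F(W\to X)$, and $\mu_F(W\to X)$ is a filter of $A$ whenever $1\in\mu_F(W\to X)$; (7) $\mu_F(W\leadsto X)=\mu_F(W\leadsto X)\cdot\mu_F(W\leadsto X)$, and $\mu_F(W\leadsto X)$ is a filter of $A$ whenever $1\in\mu_F(W\leadsto X)$.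
   Context: A quantum B-algebra is a poset $(A,\le)$ with binary operations $\to,\leadsto$ such that for all $x,y,z\in A$: $y\to z\le(x\to y)\to(x\to z)$; $y\leadsto z\le(x\leadsto y)\leadsto(x\leadsto z)$; $y\le z$ implies $x\to y\le x\to z$; and $x\le y\to z$ iff $y\le x\leadsto z$. It is integral if it has a greatest element $1$ with $1\to x=1\leadsto x=x$ for all $x$. $U(A)$ denotes the set of all upper subsets of $A$ (including $\emptyset$), a quantale under inclusion with multiplication $X\cdot Y=\{a\in A\mid\exists y\in Y:\ y\to a\in X\}$. Its residuals are: for $Y,Z\in U(A)$, $Y\to Z$ is the largest $V\in U(A)$ with $V\cdot Y\subseteq Z$, and for $X,Z\in U(A)$, $X\leadsto Z$ is the largest $V\in U(A)$ with $X\cdot V\subseteq Z$. A filter of $A$ is a nonempty $F\in U(A)$ with $F\cdot F\subseteq F$. For $F,X\in U(A)$, $\mu_F(X)=F\cap X$. *)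

theory Defs
  imports Main
begin

text \<open>A quantum B-algebra on the carrier type 'a, with partial order le and
  residual operations imp (written \<rightarrow>) and limp (written \<leadsto>).\<close>
definition quantum_B_algebra ::
  "('a \<Rightarrow> 'a \<Rightarrow> bool) \<Rightarrow> ('a \<Rightarrow> 'a \<Rightarrow> 'a) \<Rightarrow> ('a \<Rightarrow> 'a \<Rightarrow> 'a) \<Rightarrow> bool" where
  "quantum_B_algebra le imp limp \<longleftrightarrow>
     (\<forall>x. le x x) \<and>
     (\<forall>x y. le x y \<and> le y x \<longrightarrow> x = y) \<and>
     (\<forall>x y z. le x y \<and> le y z \<longrightarrow> le x z) \<and>
     (\<forall>x y z. le (imp y z) (imp (imp x y) (imp x z))) \<and>
     (\<forall>x y z. le (limp y z) (limp (limp x y) (limp x z))) \<and>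
     (\<forall>x y z. le y z \<longrightarrow> le (imp x y) (imp x z)) \<and>
     (\<forall>x y z. le x (imp y z) \<longleftrightarrow> le y (limp x z))"

definition integral_qBa ::
  "('a \<Rightarrow> 'a \<Rightarrow> bool) \<Rightarrow> ('a \<Rightarrow> 'a \<Rightarrow> 'a) \<Rightarrow> ('a \<Rightarrow> 'a \<Rightarrow> 'a) \<Rightarrow> 'a \<Rightarrow> bool" where
  "integral_qBa le imp limp one \<longleftrightarrow>
     quantum_B_algebra le imp limp \<and>
     (\<forall>x. le x one) \<and> (\<forall>x. imp one x = x \<and> limp one x = x)"

definition upset :: "('a \<Rightarrow> 'a \<Rightarrow> bool) \<Rightarrow> 'a set \<Rightarrow> bool" where
  "upset le X \<longleftrightarrow> (\<forall>x y. x \<in> X \<longrightarrow> le x y \<longrightarrow> y \<in> X)"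

definition umult :: "('a \<Rightarrow> 'a \<Rightarrow> 'a) \<Rightarrow> 'a set \<Rightarrow> 'a set \<Rightarrow> 'a set" where
  "umult imp X Y = {a. \<exists>y\<in>Y. imp y a \<in> X}"

definition uimp :: "('a \<Rightarrow> 'a \<Rightarrow> bool) \<Rightarrow> ('a \<Rightarrow> 'a \<Rightarrow> 'a) \<Rightarrow> 'a set \<Rightarrow> 'a set \<Rightarrow> 'a set" where
  "uimp le imp Y Z = (GREATEST V. upset le V \<and> umult imp V Y \<subseteq> Z)"

definition ulimp :: "('a \<Rightarrow> 'a \<Rightarrow> bool) \<Rightarrow> ('a \<Rightarrow> 'a \<Rightarrow> 'a) \<Rightarrow> 'a set \<Rightarrow> 'a set \<Rightarrow> 'a set" where
  "ulimp le imp X Z = (GREATEST V. upset le V \<and> umult imp X V \<subseteq> Z)"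

definition qfilter :: "('a \<Rightarrow> 'a \<Rightarrow> bool) \<Rightarrow> ('a \<Rightarrow> 'a \<Rightarrow> 'a) \<Rightarrow> 'a set \<Rightarrow> bool" where
  "qfilter le imp F \<longleftrightarrow> F \<noteq> {} \<and> upset le F \<and> umult imp F F \<subseteq> F"

definition mu :: "'a set \<Rightarrow> 'a set \<Rightarrow> 'a set" where
  "mu F X = F \<inter> X"

end

theory Submission
  imports Defs
begin

text \<open>Since 1 is the top element, the filter F contains 1, and so do \<open>W \<rightarrow> X\<close> and
  \<open>W \<leadsto> X\<close> because \<open>W \<subseteq> X\<close>; hence multiplying by their \<open>\<mu>\<^sub>F\<close>-parts can only
  enlarge a set. Conversely, \<open>\<mu>\<^sub>F(W \<rightarrow> X) \<cdot> W\<close> lies in \<open>F \<cdot> F \<subseteq> F\<close> and in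
  \<open>(W \<rightarrow> X) \<cdot> W \<subseteq> X\<close>, hence in W. Associativity of the multiplication of U(A)
  and residuation transport this absorption from W to \<open>W \<rightarrow> X\<close>, and intersecting
  with F once more gives idempotence; the case of \<open>\<leadsto>\<close> is the mirror image.\<close>

locale integral_quantum_B_algebra =
  fixes le :: "'a \<Rightarrow> 'a \<Rightarrow> bool" and imp limp :: "'a \<Rightarrow> 'a \<Rightarrow> 'a" and one :: 'a
  assumes integral: "integral_qBa le imp limp one"
begin

lemma le_refl: "le x x"
  and le_antisym: "le x y \<Longrightarrow> le y x \<Longrightarrow> x = y"
  and le_trans: "le x y \<Longrightarrow> le y z \<Longrightarrow> le x z"
  and limp_prefix: "le (limp y z) (limp (limp x y) (limp x z))"
  and imp_prefix: "le (imp y z) (imp (imp x y) (imp x z))"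
  and imp_mono: "le y z \<Longrightarrow> le (imp x y) (imp x z)"
  and residuation: "le x (imp y z) \<longleftrightarrow> le y (limp x z)"
  and le_one: "le x one"
  and one_imp: "imp one x = x"
  and one_limp: "limp one x = x"
  using integral unfolding integral_qBa_def quantum_B_algebra_def by blast+

lemma le_limp_imp: "le z (limp (imp z a) a)"
  using residuation le_refl by blast

lemma le_imp_limp: "le x (imp (limp x a) a)"
  using residuation le_refl by blast

lemma limp_imp_swap: "le (limp x (imp z a)) (imp z (limp x a))"
proof -
  have "le z (limp (limp x (imp z a)) (limp x a))"
    using le_trans[OF le_limp_imp limp_prefix] .
  then show ?thesis
    using residuation by blast
qed

lemma imp_eq_one_iff: "imp y a = one \<longleftrightarrow> le y a"
  by (metis residuation one_limp le_refl le_one le_antisym)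

lemma upset_singleton_one: "upset le {one}"
  unfolding upset_def using le_one le_antisym by blast

lemma upset_inter: "upset le A \<Longrightarrow> upset le B \<Longrightarrow> upset le (A \<inter> B)"
  unfolding upset_def by blast

lemma upset_umult: "upset le X \<Longrightarrow> upset le (umult imp X Y)"
  unfolding upset_def umult_def using imp_mono by blast

lemma umult_mono: "X \<subseteq> X' \<Longrightarrow> Y \<subseteq> Y' \<Longrightarrow> umult imp X Y \<subseteq> umult imp X' Y'"
  unfolding umult_def by blast

lemma umult_one_right: "umult imp X {one} = X"
  unfolding umult_def using one_imp by auto

lemma umult_one_left: "upset le Y \<Longrightarrow> umult imp {one} Y = Y"
  unfolding umult_def upset_def using imp_eq_one_iff le_refl by blast

lemma subset_umult_right: "one \<in> M \<Longrightarrow> X \<subseteq> umult imp X M"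
  using umult_mono[of X X "{one}" M] umult_one_right by auto

lemma subset_umult_left: "one \<in> M \<Longrightarrow> upset le X \<Longrightarrow> X \<subseteq> umult imp M X"
  using umult_mono[of "{one}" M X X] umult_one_left by auto

lemma umult_assoc_subset:
  assumes "upset le X"
  shows "umult imp X (umult imp Y Z) \<subseteq> umult imp (umult imp X Y) Z"
proof
  fix a
  assume "a \<in> umult imp X (umult imp Y Z)"
  then obtain v z where "z \<in> Z" "imp z v \<in> Y" "imp v a \<in> X"
    unfolding umult_def by blast
  moreover from \<open>imp v a \<in> X\<close> have "imp (imp z v) (imp z a) \<in> X"
    using assms imp_prefix unfolding upset_def by blast
  ultimately show "a \<in> umult imp (umult imp X Y) Z"
    unfolding umult_def by blast
qed

lemma umult_assoc_supset:
  assumes X: "upset le X" and Y: "upset le Y"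
  shows "umult imp (umult imp X Y) Z \<subseteq> umult imp X (umult imp Y Z)"
proof
  fix a
  assume "a \<in> umult imp (umult imp X Y) Z"
  then obtain y z where "z \<in> Z" "y \<in> Y" and x: "imp y (imp z a) \<in> X"
    unfolding umult_def by blast
  define v where "v = limp (imp y (imp z a)) a"
  \<comment> \<open>the intermediate element is the greatest \<open>v\<close> with \<open>y \<rightarrow> (z \<rightarrow> a) \<le> v \<rightarrow> a\<close>\<close>
  have "imp v a \<in> X"
    using X x le_imp_limp unfolding v_def upset_def by blast
  moreover have "le y (imp z v)"
    using residuation le_refl limp_imp_swap le_trans unfolding v_def by blast
  then have "imp z v \<in> Y"
    using Y \<open>y \<in> Y\<close> unfolding upset_def by blast
  ultimately show "a \<in> umult imp X (umult imp Y Z)"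
    using \<open>z \<in> Z\<close> unfolding umult_def by blast
qed

lemma umult_assoc:
  "upset le X \<Longrightarrow> upset le Y \<Longrightarrow> umult imp (umult imp X Y) Z = umult imp X (umult imp Y Z)"
  using umult_assoc_subset umult_assoc_supset by blast

lemma uimp_eq_Union: "uimp le imp Y Z = \<Union>{V. upset le V \<and> umult imp V Y \<subseteq> Z}"
  unfolding uimp_def
  by (rule Greatest_equality) (auto simp: upset_def umult_def)

lemma ulimp_eq_Union: "ulimp le imp Y Z = \<Union>{V. upset le V \<and> umult imp Y V \<subseteq> Z}"
  unfolding ulimp_def
  by (rule Greatest_equality) (auto simp: upset_def umult_def)

lemma upset_uimp: "upset le (uimp le imp Y Z)"
  unfolding uimp_eq_Union upset_def by blast

lemma upset_ulimp: "upset le (ulimp le imp Y Z)"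
  unfolding ulimp_eq_Union upset_def by blast

lemma subset_uimp_iff: "upset le V \<Longrightarrow> V \<subseteq> uimp le imp Y Z \<longleftrightarrow> umult imp V Y \<subseteq> Z"
  unfolding uimp_eq_Union umult_def by blast

lemma subset_ulimp_iff: "upset le V \<Longrightarrow> V \<subseteq> ulimp le imp Y Z \<longleftrightarrow> umult imp Y V \<subseteq> Z"
  unfolding ulimp_eq_Union umult_def by blast

lemma umult_uimp_subset: "umult imp (uimp le imp Y Z) Y \<subseteq> Z"
  using subset_uimp_iff[OF upset_uimp] by blast

lemma umult_ulimp_subset: "umult imp Y (ulimp le imp Y Z) \<subseteq> Z"
  using subset_ulimp_iff[OF upset_ulimp] by blast

lemma one_mem_uimp: "upset le Y \<Longrightarrow> Y \<subseteq> Z \<Longrightarrow> one \<in> uimp le imp Y Z"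
  using subset_uimp_iff[OF upset_singleton_one] umult_one_left by auto

lemma one_mem_ulimp: "Y \<subseteq> Z \<Longrightarrow> one \<in> ulimp le imp Y Z"
  using subset_ulimp_iff[OF upset_singleton_one] umult_one_right by auto

lemma umult_uimp_absorb:
  assumes "upset le W" "upset le M" "one \<in> M" "umult imp M W \<subseteq> W"
  shows "umult imp (uimp le imp W X) M = uimp le imp W X"
proof
  let ?P = "uimp le imp W X"
  have "umult imp (umult imp ?P M) W \<subseteq> umult imp ?P W"
    using assms umult_assoc[OF upset_uimp] umult_mono by (metis order_refl)
  then show "umult imp ?P M \<subseteq> ?P"
    using subset_uimp_iff upset_umult[OF upset_uimp] umult_uimp_subset by blast
  show "?P \<subseteq> umult imp ?P M"
    using \<open>one \<in> M\<close> by (rule subset_umult_right)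
qed

lemma umult_ulimp_absorb:
  assumes "upset le W" "upset le N" "one \<in> N" "umult imp W N \<subseteq> W"
  shows "umult imp N (ulimp le imp W X) = ulimp le imp W X"
proof
  let ?Q = "ulimp le imp W X"
  have "umult imp W (umult imp N ?Q) \<subseteq> umult imp W ?Q"
    using assms umult_assoc umult_mono by (metis order_refl)
  then show "umult imp N ?Q \<subseteq> ?Q"
    using subset_ulimp_iff upset_umult assms(2) umult_ulimp_subset by blast
  show "?Q \<subseteq> umult imp N ?Q"
    using \<open>one \<in> N\<close> upset_ulimp by (rule subset_umult_left)
qed

lemma uimp_eq_of_umult_eq:
  assumes "one \<in> M" "upset le P" "umult imp P M = P"
  shows "uimp le imp M P = P"
proof
  show "uimp le imp M P \<subseteq> P"
    using subset_umult_right[OF \<open>one \<in> M\<close>] umult_uimp_subset by blast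
  show "P \<subseteq> uimp le imp M P"
    using assms subset_uimp_iff by blast
qed

lemma ulimp_eq_of_umult_eq:
  assumes "one \<in> N" "upset le Q" "umult imp N Q = Q"
  shows "ulimp le imp N Q = Q"
proof
  show "ulimp le imp N Q \<subseteq> Q"
    using subset_umult_left[OF \<open>one \<in> N\<close> upset_ulimp] umult_ulimp_subset by blast
  show "Q \<subseteq> ulimp le imp N Q"
    using assms subset_ulimp_iff by blast
qed

lemma one_mem_qfilter: "qfilter le imp F \<Longrightarrow> one \<in> F"
  unfolding qfilter_def upset_def using le_one by blast

lemma qfilter_mu:
  assumes "qfilter le imp F" "upset le P" "one \<in> P" "umult imp (mu F P) (mu F P) \<subseteq> P"
  shows "mu F P = umult imp (mu F P) (mu F P)" "qfilter le imp (mu F P)"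
proof -
  have "one \<in> mu F P"
    using assms one_mem_qfilter unfolding mu_def by blast
  moreover have "umult imp (mu F P) (mu F P) \<subseteq> umult imp F F"
    unfolding mu_def by (rule umult_mono) auto
  ultimately show eq: "mu F P = umult imp (mu F P) (mu F P)"
    using assms subset_umult_right unfolding qfilter_def mu_def by blast
  show "qfilter le imp (mu F P)"
    using assms \<open>one \<in> mu F P\<close> eq upset_inter unfolding qfilter_def mu_def by auto
qed

context
  fixes F X :: "'a set"
  assumes filter: "qfilter le imp F" and upset_X: "upset le X"
begin

lemma upset_mu: "upset le (mu F X)"
  using filter upset_X upset_inter unfolding qfilter_def mu_def by blast

lemma umult_mu_subset:
  assumes "umult imp A B \<subseteq> X" "A \<subseteq> F" "B \<subseteq> F"
  shows "umult imp A B \<subseteq> mu F X"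
  using assms umult_mono[of A F B F] filter unfolding qfilter_def mu_def by blast

lemma mu_uimp_properties:
  defines "W \<equiv> mu F X"
  defines "M \<equiv> mu F (uimp le imp W X)"
  shows "W = umult imp M W"
    and "uimp le imp M (uimp le imp W X) = uimp le imp W X"
    and "umult imp (uimp le imp W X) M = uimp le imp W X"
    and "M = umult imp M M" "qfilter le imp M"
proof -
  have "one \<in> uimp le imp W X"
    using upset_mu one_mem_uimp unfolding W_def mu_def by blast
  then have "one \<in> M"
    using filter one_mem_qfilter unfolding M_def mu_def by blast
  have upset_M: "upset le M"
    using filter upset_uimp upset_inter unfolding qfilter_def M_def mu_def by blast
  have "umult imp M W \<subseteq> umult imp (uimp le imp W X) W"
    by (rule umult_mono) (auto simp: M_def mu_def)
  also have "\<dots> \<subseteq> X"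
    by (rule umult_uimp_subset)
  finally have "umult imp M W \<subseteq> W"
    unfolding W_def by (rule umult_mu_subset) (auto simp: M_def mu_def)
  then show "W = umult imp M W"
    using \<open>one \<in> M\<close> subset_umult_left upset_mu unfolding W_def by blast
  have absorb: "umult imp (uimp le imp W X) M = uimp le imp W X"
    using upset_mu upset_M \<open>one \<in> M\<close> \<open>umult imp M W \<subseteq> W\<close>
    unfolding W_def by (rule umult_uimp_absorb)
  then show "umult imp (uimp le imp W X) M = uimp le imp W X" .
  show "uimp le imp M (uimp le imp W X) = uimp le imp W X"
    using \<open>one \<in> M\<close> upset_uimp absorb by (rule uimp_eq_of_umult_eq)
  have "umult imp M M \<subseteq> uimp le imp W X"
    using umult_mono[of M "uimp le imp W X" M M] absorb unfolding M_def mu_def by blast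
  then show "M = umult imp M M" "qfilter le imp M"
    using qfilter_mu[OF filter upset_uimp \<open>one \<in> uimp le imp W X\<close>] unfolding M_def by auto
qed

lemma mu_ulimp_properties:
  defines "W \<equiv> mu F X"
  defines "N \<equiv> mu F (ulimp le imp W X)"
  shows "umult imp W N = W"
    and "ulimp le imp N (ulimp le imp W X) = ulimp le imp W X"
    and "umult imp N (ulimp le imp W X) = ulimp le imp W X"
    and "N = umult imp N N" "qfilter le imp N"
proof -
  have "one \<in> ulimp le imp W X"
    using one_mem_ulimp unfolding W_def mu_def by blast
  then have "one \<in> N"
    using filter one_mem_qfilter unfolding N_def mu_def by blast
  have upset_N: "upset le N"
    using filter upset_ulimp upset_inter unfolding qfilter_def N_def mu_def by blast
  have "umult imp W N \<subseteq> umult imp W (ulimp le imp W X)"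
    by (rule umult_mono) (auto simp: N_def mu_def)
  also have "\<dots> \<subseteq> X"
    by (rule umult_ulimp_subset)
  finally have "umult imp W N \<subseteq> W"
    unfolding W_def by (rule umult_mu_subset) (auto simp: N_def mu_def)
  then show "umult imp W N = W"
    using \<open>one \<in> N\<close> subset_umult_right by blast
  have absorb: "umult imp N (ulimp le imp W X) = ulimp le imp W X"
    using upset_mu upset_N \<open>one \<in> N\<close> \<open>umult imp W N \<subseteq> W\<close>
    unfolding W_def by (rule umult_ulimp_absorb)
  then show "umult imp N (ulimp le imp W X) = ulimp le imp W X" .
  show "ulimp le imp N (ulimp le imp W X) = ulimp le imp W X"
    using \<open>one \<in> N\<close> upset_ulimp absorb by (rule ulimp_eq_of_umult_eq)
  have "umult imp N N \<subseteq> ulimp le imp W X"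
    using umult_mono[of N N N "ulimp le imp W X"] absorb unfolding N_def mu_def by blast
  then show "N = umult imp N N" "qfilter le imp N"
    using qfilter_mu[OF filter upset_ulimp \<open>one \<in> ulimp le imp W X\<close>] unfolding N_def by auto
qed

end

end

theorem proposition3p3:
  fixes le :: "'a \<Rightarrow> 'a \<Rightarrow> bool" and imp limp :: "'a \<Rightarrow> 'a \<Rightarrow> 'a"
    and one :: 'a and X F W :: "'a set"
  assumes "integral_qBa le imp limp one"
    and "upset le X" and "upset le F"
    and "qfilter le imp F"
    and "one \<in> X \<inter> F"
    and W_def: "W = mu F X"
  shows "(umult imp W (mu F (ulimp le imp W X)) = W
       \<and> W = umult imp (mu F (uimp le imp W X)) W)
    \<and> (uimp le imp (mu F (uimp le imp W X)) (uimp le imp W X) = uimp le imp W X)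
    \<and> (ulimp le imp (mu F (ulimp le imp W X)) (ulimp le imp W X) = ulimp le imp W X)
    \<and> (umult imp (uimp le imp W X) (mu F (uimp le imp W X)) = uimp le imp W X)
    \<and> (umult imp (mu F (ulimp le imp W X)) (ulimp le imp W X) = ulimp le imp W X)
    \<and> (mu F (uimp le imp W X) = umult imp (mu F (uimp le imp W X)) (mu F (uimp le imp W X))
       \<and> (one \<in> mu F (uimp le imp W X) \<longrightarrow> qfilter le imp (mu F (uimp le imp W X))))
    \<and> (mu F (ulimp le imp W X) = umult imp (mu F (ulimp le imp W X)) (mu F (ulimp le imp W X))
       \<and> (one \<in> mu F (ulimp le imp W X) \<longrightarrow> qfilter le imp (mu F (ulimp le imp W X))))"
proof -
  interpret integral_quantum_B_algebra le imp limp one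
    using assms(1) by unfold_locales
  show ?thesis
    using mu_uimp_properties[OF assms(4,2)] mu_ulimp_properties[OF assms(4,2)]
    unfolding W_def by blast
qed

end
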